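(* Let $\mathcal{Z}\subset\mathbb{R}^d$ be an integral, unit-generated lattice, and let $K$ be its Dirichlet region. Then $\partial K$ is contained in the union of the hyperplanes $\{x: x\cdot z=1/2\}$, where $z$ ranges over the elements of $\mathcal{Z}$ of norm $1$.
   Context: A lattice is a discrete additive subgroup of $\mathbb{R}^d$ with compact quotient. Integral: $z\cdot z\in\mathbb{Z}$ for all $z\in\mathcal{Z}$. Unit-generated: every element of $\mathcal{Z}$ is a sum of elements of $\mathcal{Z}$ of Euclidean norm $1$. Dirichlet region: $K=\{x:|x|\le|x-z|\ \forall z\in\mathcal{Z}\}$. *)

theory Defs
  imports "HOL-Analysis.Analysis"
begin

text \<open>A lattice in a Euclidean space: a discrete additive subgroup with compact
  quotient (equivalently: some bounded set of representatives covers the space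
  by translates).\<close>
definition is_lattice :: "'a::euclidean_space set \<Rightarrow> bool" where
  "is_lattice Z \<longleftrightarrow>
     0 \<in> Z \<and> (\<forall>x\<in>Z. \<forall>y\<in>Z. x - y \<in> Z) \<and>
     (\<exists>e>0. \<forall>z\<in>Z. z \<noteq> 0 \<longrightarrow> e \<le> norm z) \<and>
     (\<exists>B. bounded B \<and> (\<forall>x. \<exists>z\<in>Z. \<exists>b\<in>B. x = z + b))"

definition integral_lattice :: "'a::euclidean_space set \<Rightarrow> bool" where
  "integral_lattice Z \<longleftrightarrow> (\<forall>z\<in>Z. z \<bullet> z \<in> \<int>)"

definition unit_vectors_of :: "'a::euclidean_space set \<Rightarrow> 'a set" where
  "unit_vectors_of Z = {z \<in> Z. norm z = 1}"

definition unit_generated :: "'a::euclidean_space set \<Rightarrow> bool" where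
  "unit_generated Z \<longleftrightarrow>
     (\<forall>z\<in>Z. \<exists>xs. set xs \<subseteq> unit_vectors_of Z \<and> sum_list xs = z)"

definition dirichlet_region :: "'a::euclidean_space set \<Rightarrow> 'a set" where
  "dirichlet_region Z = {x. \<forall>z\<in>Z. norm x \<le> norm (x - z)}"

end

theory Submission
  imports Defs
begin

text \<open>Since \<open>|x|\<^sup>2 \<le> |x - z|\<^sup>2\<close> means \<open>2 x\<cdot>z \<le> z\<cdot>z\<close>, it suffices to show that the unit
  vectors alone cut out \<open>K\<close>, i.e. that \<open>x\<cdot>u \<le> 1/2\<close> for all units \<open>u\<close> forces
  \<open>2 x\<cdot>z \<le> z\<cdot>z\<close> for every \<open>z\<close>. Write \<open>z\<close> as a shortest sum of unit vectors
  \<open>u\<^sub>1 + \<dots> + u\<^sub>n\<close>. If two summands had \<open>u\<^sub>i\<cdot>u\<^sub>j < 0\<close>, integrality would force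
  \<open>|u\<^sub>i + u\<^sub>j|\<^sup>2 \<in> {0, 1}\<close>, and the pair could be replaced by at most one summand.
  Hence all \<open>u\<^sub>i\<cdot>u\<^sub>j \<ge> 0\<close>, so \<open>z\<cdot>z \<ge> n \<ge> 2 x\<cdot>z\<close>. Finally, a set cut out by the
  half-spaces \<open>x\<cdot>u \<le> 1/2\<close> for \<open>u\<close> in a compact set has its boundary on the bounding
  hyperplanes, and the unit vectors of a lattice form a compact set.\<close>

lemma norm_le_norm_diff_iff:
  fixes x z :: "'a::real_inner"
  shows "norm x \<le> norm (x - z) \<longleftrightarrow> 2 * (x \<bullet> z) \<le> z \<bullet> z"
proof -
  have "norm x \<le> norm (x - z) \<longleftrightarrow> (norm x)\<^sup>2 \<le> (norm (x - z))\<^sup>2"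
    by (simp add: norm_le_square)
  also have "\<dots> \<longleftrightarrow> 2 * (x \<bullet> z) \<le> z \<bullet> z"
    by (simp add: power2_norm_eq_inner inner_diff_left inner_diff_right inner_commute)
  finally show ?thesis .
qed

lemma inner_sum_list_right: "a \<bullet> sum_list xs = (\<Sum>b\<leftarrow>xs. a \<bullet> b)"
  by (induction xs) (auto simp: inner_add_right)

lemma closed_Inter_halfspaces_le: "closed {x::'a::real_inner. \<forall>u\<in>U. x \<bullet> u \<le> c}"
proof -
  have "closed {x::'a. x \<bullet> u \<le> c}" for u
    using closed_halfspace_le[of u c] by (simp add: inner_commute)
  then have "closed (\<Inter>u\<in>U. {x::'a. x \<bullet> u \<le> c})"
    by blast
  moreover have "{x. \<forall>u\<in>U. x \<bullet> u \<le> c} = (\<Inter>u\<in>U. {x. x \<bullet> u \<le> c})"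
    by auto
  ultimately show ?thesis
    by (simp only:)
qed

lemma interior_Inter_halfspaces_le:
  fixes U :: "'a::real_inner set"
  assumes "compact U" and less: "\<And>u. u \<in> U \<Longrightarrow> x \<bullet> u < c"
  shows "x \<in> interior {x. \<forall>u\<in>U. x \<bullet> u \<le> c}"
proof (cases "U = {}")
  case True
  then show ?thesis by simp
next
  case False
  have "continuous_on U (\<lambda>u. x \<bullet> u)"
    by (intro continuous_intros)
  then obtain u0 where u0: "u0 \<in> U" "\<And>u. u \<in> U \<Longrightarrow> x \<bullet> u \<le> x \<bullet> u0"
    using continuous_attains_sup[OF assms(1) False] by blast
  obtain B where B: "B > 0" "\<And>u. u \<in> U \<Longrightarrow> norm u \<le> B"
    using compact_imp_bounded[OF assms(1)] bounded_pos by metis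
  define r where "r = (c - x \<bullet> u0) / B"
  have "r > 0"
    using less[OF u0(1)] B(1) by (simp add: r_def)
  have "ball x r \<subseteq> {x. \<forall>u\<in>U. x \<bullet> u \<le> c}"
  proof (intro subsetI CollectI ballI)
    fix y u assume y: "y \<in> ball x r" and u: "u \<in> U"
    have "norm (y - x) < r"
      using y by (simp add: dist_norm norm_minus_commute)
    then have "norm (y - x) * B < c - x \<bullet> u0"
      using B(1) by (simp add: r_def pos_less_divide_eq)
    moreover have "(y - x) \<bullet> u \<le> norm (y - x) * B"
      using order_trans[OF norm_cauchy_schwarz mult_left_mono[OF B(2)[OF u] norm_ge_zero]] .
    ultimately show "y \<bullet> u \<le> c"
      using u0(2)[OF u] by (simp add: inner_diff_left)
  qed
  then have "ball x r \<subseteq> interior {x. \<forall>u\<in>U. x \<bullet> u \<le> c}"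
    by (rule interior_maximal) simp
  then show ?thesis
    using \<open>r > 0\<close> centre_in_ball by blast
qed

lemma frontier_Inter_halfspaces_le_subset:
  fixes U :: "'a::real_inner set"
  assumes "compact U"
  shows "frontier {x. \<forall>u\<in>U. x \<bullet> u \<le> c} \<subseteq> (\<Union>u\<in>U. {x. x \<bullet> u = c})"
proof
  fix x assume x: "x \<in> frontier {x. \<forall>u\<in>U. x \<bullet> u \<le> c}"
  then have le: "x \<bullet> u \<le> c" if "u \<in> U" for u
    using that frontier_subset_closed[OF closed_Inter_halfspaces_le] by blast
  have "x \<notin> interior {x. \<forall>u\<in>U. x \<bullet> u \<le> c}"
    using x by (simp add: frontier_def)
  then obtain u where "u \<in> U" "\<not> x \<bullet> u < c"
    using interior_Inter_halfspaces_le[OF assms] by blast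
  with le show "x \<in> (\<Union>u\<in>U. {x. x \<bullet> u = c})"
    by force
qed

lemma is_lattice_add:
  assumes "is_lattice Z" "a \<in> Z" "b \<in> Z"
  shows "a + b \<in> Z"
proof -
  have "0 - b \<in> Z"
    using assms unfolding is_lattice_def by blast
  then have "a - (0 - b) \<in> Z"
    using assms unfolding is_lattice_def by blast
  then show ?thesis by simp
qed

lemma is_lattice_closed:
  assumes "is_lattice Z"
  shows "closed Z"
proof -
  obtain e where e: "e > 0" "\<And>z. z \<in> Z \<Longrightarrow> z \<noteq> 0 \<Longrightarrow> e \<le> norm z"
    using assms unfolding is_lattice_def by blast
  show ?thesis
  proof (rule discrete_imp_closed[OF e(1)], intro ballI impI)
    fix x y assume "x \<in> Z" "y \<in> Z" "dist y x < e"
    moreover from \<open>x \<in> Z\<close> \<open>y \<in> Z\<close> have "y - x \<in> Z"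
      using assms unfolding is_lattice_def by blast
    ultimately show "y = x"
      using e(2) by (metis dist_norm not_le eq_iff_diff_eq_0)
  qed
qed

lemma compact_unit_vectors_of:
  assumes "is_lattice Z"
  shows "compact (unit_vectors_of Z)"
proof -
  have "unit_vectors_of Z = Z \<inter> sphere 0 1"
    by (auto simp: unit_vectors_of_def)
  then show ?thesis
    using closed_Int_compact[OF is_lattice_closed[OF assms] compact_sphere] by simp
qed

lemma unit_vectors_of_add_obtuse:
  assumes "is_lattice Z" "integral_lattice Z"
    and a: "a \<in> unit_vectors_of Z" and b: "b \<in> unit_vectors_of Z" and "a \<bullet> b < 0"
  shows "a + b = 0 \<or> a + b \<in> unit_vectors_of Z"
proof -
  have "a + b \<in> Z"
    using is_lattice_add assms by (auto simp: unit_vectors_of_def)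
  then obtain k :: int where k: "(a + b) \<bullet> (a + b) = of_int k"
    using \<open>integral_lattice Z\<close> unfolding integral_lattice_def by (blast elim: Ints_cases)
  have "a \<bullet> a = 1" "b \<bullet> b = 1"
    using a b by (auto simp: unit_vectors_of_def norm_eq_1)
  then have "(a + b) \<bullet> (a + b) = 2 + 2 * (a \<bullet> b)"
    by (simp add: inner_add_left inner_add_right inner_commute)
  then have "k = 0 \<or> k = 1"
    using k \<open>a \<bullet> b < 0\<close> inner_ge_zero[of "a + b"] by linarith
  then show ?thesis
    using k \<open>a + b \<in> Z\<close> by (auto simp: unit_vectors_of_def norm_eq_1)
qed

definition shortest_unit_sum :: "'a::euclidean_space set \<Rightarrow> 'a list \<Rightarrow> bool" where
  "shortest_unit_sum Z xs \<longleftrightarrow> set xs \<subseteq> unit_vectors_of Z \<and>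
     (\<forall>ys. set ys \<subseteq> unit_vectors_of Z \<and> sum_list ys = sum_list xs \<longrightarrow> length xs \<le> length ys)"

lemma shortest_unit_sum_exists:
  assumes "unit_generated Z" "z \<in> Z"
  obtains xs where "shortest_unit_sum Z xs" "sum_list xs = z"
proof -
  let ?R = "\<lambda>xs. set xs \<subseteq> unit_vectors_of Z \<and> sum_list xs = z"
  obtain xs0 where "?R xs0"
    using assms unfolding unit_generated_def by blast
  then obtain xs where "?R xs" "\<And>ys. ?R ys \<Longrightarrow> length xs \<le> length ys"
    using ex_has_least_nat[of ?R xs0 length] by blast
  then show ?thesis
    using that unfolding shortest_unit_sum_def by blast
qed

lemma shortest_unit_sum_Cons:
  assumes "shortest_unit_sum Z (a # xs)"
  shows "shortest_unit_sum Z xs"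
  unfolding shortest_unit_sum_def
proof (intro conjI allI impI)
  fix ys assume "set ys \<subseteq> unit_vectors_of Z \<and> sum_list ys = sum_list xs"
  then have "length (a # xs) \<le> length (a # ys)"
    using assms unfolding shortest_unit_sum_def by (metis insert_subset list.set(2) sum_list.Cons)
  then show "length xs \<le> length ys" by simp
qed (use assms in \<open>auto simp: shortest_unit_sum_def\<close>)

lemma shortest_unit_sum_inner_nonneg:
  assumes "is_lattice Z" "integral_lattice Z"
    and short: "shortest_unit_sum Z (a # xs)" and "b \<in> set xs"
  shows "a \<bullet> b \<ge> 0"
proof (rule ccontr)
  assume "\<not> a \<bullet> b \<ge> 0"
  obtain p q where xs: "xs = p @ b # q"
    using \<open>b \<in> set xs\<close> split_list by metis
  have units: "set (a # xs) \<subseteq> unit_vectors_of Z"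
    using short by (simp add: shortest_unit_sum_def)
  have shorter: "length (a # xs) \<le> length ys"
    if "set ys \<subseteq> unit_vectors_of Z" "sum_list ys = sum_list (a # xs)" for ys
    using short that by (simp add: shortest_unit_sum_def)
  have sum: "sum_list (a # xs) = (a + b) + sum_list (p @ q)"
    by (simp add: xs algebra_simps)
  have "a + b = 0 \<or> a + b \<in> unit_vectors_of Z"
    using units \<open>\<not> a \<bullet> b \<ge> 0\<close> unit_vectors_of_add_obtuse[OF assms(1,2)]
    by (simp add: xs)
  have rest: "set (p @ q) \<subseteq> unit_vectors_of Z"
    using units by (simp add: xs)
  show False
  proof (cases "a + b = 0")
    case True
    then have "length (a # xs) \<le> length (p @ q)"
      using shorter[OF rest] sum by simp
    then show False
      by (simp add: xs)
  next
    case False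
    with \<open>a + b = 0 \<or> a + b \<in> unit_vectors_of Z\<close>
    have "set ((a + b) # p @ q) \<subseteq> unit_vectors_of Z"
      using rest by simp
    from shorter[OF this] have "length (a # xs) \<le> length ((a + b) # p @ q)"
      using sum by simp
    then show False
      by (simp add: xs)
  qed
qed

lemma shortest_unit_sum_length_le:
  assumes "is_lattice Z" "integral_lattice Z" "shortest_unit_sum Z xs"
  shows "real (length xs) \<le> sum_list xs \<bullet> sum_list xs"
  using assms(3)
proof (induction xs)
  case Nil
  then show ?case by simp
next
  case (Cons a xs)
  have "a \<bullet> a = 1"
    using Cons.prems by (auto simp: shortest_unit_sum_def unit_vectors_of_def norm_eq_1)
  moreover have "0 \<le> a \<bullet> sum_list xs"
    unfolding inner_sum_list_right
    by (rule sum_list_nonneg) (auto intro: shortest_unit_sum_inner_nonneg[OF assms(1,2) Cons.prems])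
  moreover have "real (length xs) \<le> sum_list xs \<bullet> sum_list xs"
    using Cons shortest_unit_sum_Cons by blast
  ultimately show ?case
    by (simp add: inner_add_left inner_add_right inner_commute)
qed

lemma dirichlet_region_eq_unit_halfspaces:
  fixes Z :: "'a::euclidean_space set"
  assumes "is_lattice Z" "integral_lattice Z" "unit_generated Z"
  shows "dirichlet_region Z = {x. \<forall>u\<in>unit_vectors_of Z. x \<bullet> u \<le> 1/2}"
proof -
  have "2 * (x \<bullet> z) \<le> z \<bullet> z"
    if x: "\<forall>u\<in>unit_vectors_of Z. x \<bullet> u \<le> 1/2" and "z \<in> Z" for x z :: 'a
  proof -
    obtain xs where xs: "shortest_unit_sum Z xs" "sum_list xs = z"
      using shortest_unit_sum_exists assms(3) \<open>z \<in> Z\<close> by blast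
    have "x \<bullet> z = (\<Sum>b\<leftarrow>xs. x \<bullet> b)"
      using xs(2) inner_sum_list_right by metis
    also have "\<dots> \<le> (\<Sum>b\<leftarrow>xs. 1/2)"
      using x xs(1) by (intro sum_list_mono) (auto simp: shortest_unit_sum_def)
    also have "\<dots> = real (length xs) / 2"
      by (simp add: sum_list_triv)
    finally show ?thesis
      using shortest_unit_sum_length_le[OF assms(1,2) xs(1)] xs(2) by simp
  qed
  then show ?thesis
    unfolding dirichlet_region_def norm_le_norm_diff_iff
    by (fastforce simp: unit_vectors_of_def norm_eq_1)
qed

theorem lemma4p7:
  fixes Z :: "'a::euclidean_space set"
  assumes "is_lattice Z" and "integral_lattice Z" and "unit_generated Z"
  shows "frontier (dirichlet_region Z) \<subseteq>
           (\<Union>z\<in>unit_vectors_of Z. {x. x \<bullet> z = 1/2})"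
  unfolding dirichlet_region_eq_unit_halfspaces[OF assms]
  using frontier_Inter_halfspaces_le_subset[OF compact_unit_vectors_of[OF assms(1)]] .

end
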